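(* Let $[a,b]\subset\mathbb R$, $n,m,m_d\in\mathbb N$, and let $\mathcal J=\sum_{j=0}^{m}P_j\partial_z^j$ with constant matrices $P_j\in\mathbb R^{n\times n}$ satisfying $P_j=(-1)^{j+1}P_j^\top$ for $j\in[0:m]$. Let $\mathcal I=\{(i_1,j_1),\ldots,(i_l,j_l)\}\subset[1:n]\times[0:m_d]$ be a set of distinct index pairs ordered so that $j_1\le j_2\le\cdots\le j_l$, let $H:\mathbb R^l\to\mathbb R$ be smooth, and consider the Hamiltonian functional $\mathcal H(x)=\int_a^b H\big(\partial_z^{j_1}x_{i_1}(z),\ldots,\partial_z^{j_l}x_{i_l}(z)\big)\,\mathrm dz$ for sufficiently smooth $x:[a,b]\to\mathbb R^n$. Let $x$ be a (sufficiently smooth) solution of the Hamiltonian system $\frac{\mathrm d}{\mathrm dt}x=\mathcal J\,\delta_x\mathcal H(x)$, and define the extended state $\bar x=(\partial_z^{j_1}x_{i_1},\ldots,\partial_z^{j_l}x_{i_l})^\top$ and the lifted functional $\bar{\mathcal H}(\bar x)=\int_a^b H(\bar x_1(z),\ldots,\bar x_l(z))\,\mathrm dz$, in which $\bar x_1,\ldots,\bar x_l$ are regarded as independent functions. Then $\bar x$ satisfies the Hamiltonian system $$\frac{\mathrm d}{\mathrm dt}\bar x=\mathbb J\,\delta_{\bar x}\bar{\mathcal H}(\bar x),$$ where $\mathbb J$ is the $l\times l$ matrix differential operator with $(p,q)$-entry $\mathbb J_{pq}=\partial_z^{j_p}\,\mathcal J_{i_p i_q}\,(-\partial_z)^{j_q}$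 for $p,q\in[1:l]$ (equivalently $\mathbb J=D_+\,(\mathcal J_{i_pi_q})_{p,q=1}^l\,D_-$ with $D_\pm=\operatorname{diag}((\pm\partial_z)^{j_1},\ldots,(\pm\partial_z)^{j_l})$), and $\mathbb J$ is formally skew-adjoint.
   Context: For a matrix differential operator $\mathcal J=\sum_j P_j\partial_z^j$, $\mathcal J_{ik}$ denotes the scalar differential operator $\sum_j (P_j)_{ik}\partial_z^j$. The variational derivative $\delta_x\mathcal H(x)$ of a functional $\mathcal H$ is the function defined by $\frac{d}{d\varepsilon}\big|_{\varepsilon=0}\mathcal H(x+\varepsilon\eta)=\int_a^b\langle\delta_x\mathcal H(x)(z),\eta(z)\rangle_{\mathbb R^n}\,\mathrm dz$ for all $\eta\in H_0^{m_d}([a,b],\mathbb R^n)$. Since in $\bar{\mathcal H}$ the $\bar x_k$ are independent variables, $\delta_{\bar x}\bar{\mathcal H}(\bar x)=\big(\tfrac{\partial H}{\partial y_1}(\bar x),\ldots,\tfrac{\partial H}{\partial y_l}(\bar x)\big)^\top$. A matrix differential operator $\mathbb J$ is formally skew-adjoint if it equals minus its formal $L^2$-adjoint, i.e. $\int_a^b\langle e,\mathbb J f\rangle\,\mathrm dz=-\int_a^b\langle\mathbb J e,f\rangle\,\mathrm dz$ for all smooth compactly supported $e,f$. *)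

theory Defs
  imports "HOL-Analysis.Analysis"
begin

definition dz :: "nat \<Rightarrow> (real \<Rightarrow> real) \<Rightarrow> real \<Rightarrow> real" where
  "dz k f = (deriv ^^ k) f"

definition pder :: "'a::euclidean_space \<Rightarrow> ('a \<Rightarrow> real) \<Rightarrow> 'a \<Rightarrow> real" where
  "pder b f = (\<lambda>y. deriv (\<lambda>s. f (y + s *\<^sub>R b)) 0)"

definition smooth :: "('a::euclidean_space \<Rightarrow> real) \<Rightarrow> bool" where
  "smooth f \<longleftrightarrow> (\<forall>bs. set bs \<subseteq> Basis \<longrightarrow>
      continuous_on UNIV (foldr pder bs f) \<and>
      (\<forall>b\<in>Basis. \<forall>y. (\<lambda>s. foldr pder bs f (y + s *\<^sub>R b)) differentiable (at 0)))"

definition test_fun :: "real \<Rightarrow> real \<Rightarrow> (real \<Rightarrow> real^'k) \<Rightarrow> bool" where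
  "test_fun a b \<eta> \<longleftrightarrow> (\<forall>i. smooth (\<lambda>z. \<eta> z $ i)) \<and>
      (\<exists>c d. a < c \<and> c \<le> d \<and> d < b \<and> (\<forall>z. z \<notin> {c..d} \<longrightarrow> \<eta> z = 0))"

text \<open>\<open>\<H>(x) = \<integral>_a^b H(\<partial>^{j_1} x_{i_1}, ..., \<partial>^{j_l} x_{i_l}) dz\<close>; the index pairs are
  \<open>I p = (i_p, j_p)\<close>.\<close>
definition Hfunc :: "real \<Rightarrow> real \<Rightarrow> (real^'l \<Rightarrow> real) \<Rightarrow> ('l \<Rightarrow> 'n \<times> nat)
    \<Rightarrow> (real \<Rightarrow> real^'n) \<Rightarrow> real" where
  "Hfunc a b H I x = integral {a..b}
     (\<lambda>z. H (\<chi> p. dz (snd (I p)) (\<lambda>w. x w $ fst (I p)) z))"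

definition is_var_deriv :: "real \<Rightarrow> real \<Rightarrow> ((real \<Rightarrow> real^'n) \<Rightarrow> real)
    \<Rightarrow> (real \<Rightarrow> real^'n) \<Rightarrow> (real \<Rightarrow> real^'n) \<Rightarrow> bool" where
  "is_var_deriv a b F x g \<longleftrightarrow> (\<forall>\<eta>. test_fun a b \<eta> \<longrightarrow>
      ((\<lambda>\<epsilon>. F (\<lambda>z. x z + \<epsilon> *\<^sub>R \<eta> z)) has_real_derivative
        integral {a..b} (\<lambda>z. g z \<bullet> \<eta> z)) (at 0))"

definition Jentry :: "(nat \<Rightarrow> real^'n^'n) \<Rightarrow> nat \<Rightarrow> 'n \<Rightarrow> 'n \<Rightarrow> (real \<Rightarrow> real) \<Rightarrow> real \<Rightarrow> real" where
  "Jentry P m r c f z = (\<Sum>k\<le>m. P k $ r $ c * dz k f z)"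

definition Jop :: "(nat \<Rightarrow> real^'n^'n) \<Rightarrow> nat \<Rightarrow> (real \<Rightarrow> real^'n) \<Rightarrow> real \<Rightarrow> real^'n" where
  "Jop P m g z = (\<chi> r. \<Sum>c\<in>UNIV. Jentry P m r c (\<lambda>w. g w $ c) z)"

definition Jbb :: "(nat \<Rightarrow> real^'n^'n) \<Rightarrow> nat \<Rightarrow> ('l \<Rightarrow> 'n \<times> nat)
    \<Rightarrow> (real \<Rightarrow> real^'l) \<Rightarrow> real \<Rightarrow> real^'l" where
  "Jbb P m I f z = (\<chi> p. \<Sum>q\<in>UNIV.
      dz (snd (I p))
        (\<lambda>w. Jentry P m (fst (I p)) (fst (I q))
               (\<lambda>v. (-1) ^ snd (I q) * dz (snd (I q)) (\<lambda>u. f u $ q) v) w) z)"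

definition formally_skew_adjoint :: "real \<Rightarrow> real \<Rightarrow> ((real \<Rightarrow> real^'l) \<Rightarrow> real \<Rightarrow> real^'l) \<Rightarrow> bool" where
  "formally_skew_adjoint a b Op \<longleftrightarrow> (\<forall>e f. test_fun a b e \<longrightarrow> test_fun a b f \<longrightarrow>
      integral {a..b} (\<lambda>z. e z \<bullet> Op f z) = - integral {a..b} (\<lambda>z. Op e z \<bullet> f z))"

end

theory Submission
  imports Defs "HOL-Computational_Algebra.Polynomial"
begin

text \<open>
  Write \<open>E x = x_bar\<close> for the extended state, \<open>(E x)_p = \<partial>^j_p x_i_p\<close>, and \<open>E^*\<close> for its formal
  adjoint, \<open>E^* f = \<Sum>_q (-\<partial>)^j_q f_q e_i_q\<close>. Testing the first variation of \<open>\<H>\<close> with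
  \<open>\<phi> e_c\<close>, integrating by parts and applying the fundamental lemma of the calculus of
  variations identifies the variational derivative: \<open>\<delta>_x\<H>(x) = E^* \<nabla>H(x_bar)\<close>.
  Since \<open>\<partial>_t\<close> commutes with \<open>\<partial>_z\<close> on the smooth solution, \<open>\<partial>_t x_bar = E \<J> E^* \<nabla>H(x_bar)\<close>,
  and \<open>E \<J> E^*\<close> is exactly \<open>\<JJ>\<close>. Skew-adjointness of \<open>\<JJ>\<close> follows from this factorisation:
  \<open>E\<close> and \<open>E^*\<close> are formal adjoints of each other, and \<open>\<J>\<close> is formally skew-adjoint because
  moving \<open>\<partial>^k\<close> across an integral costs \<open>(-1)^k\<close>, which \<open>P_k = (-1)^(k+1) P_k^T\<close> turns into \<open>-1\<close>.
\<close>

section \<open>Infinitely differentiable functions of one variable\<close>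

definition differentiable_upto :: "nat \<Rightarrow> (real \<Rightarrow> real) \<Rightarrow> bool" where
  "differentiable_upto k f \<longleftrightarrow> (\<forall>i\<le>k. \<forall>x. dz i f field_differentiable (at x))"

definition C_infinity :: "(real \<Rightarrow> real) \<Rightarrow> bool" where
  "C_infinity f \<longleftrightarrow> (\<forall>k x. dz k f field_differentiable (at x))"

definition C_infinity_vec :: "(real \<Rightarrow> real^'n) \<Rightarrow> bool" where
  "C_infinity_vec f \<longleftrightarrow> (\<forall>i. C_infinity (\<lambda>z. f z $ i))"

definition vanishes_outside :: "real \<Rightarrow> real \<Rightarrow> (real \<Rightarrow> 'a::zero) \<Rightarrow> bool" where
  "vanishes_outside c d f \<longleftrightarrow> (\<forall>z. z \<notin> {c..d} \<longrightarrow> f z = 0)"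

lemma dz_0 [simp]: "dz 0 f = f"
  by (simp add: dz_def)

lemma dz_Suc: "dz (Suc k) f = deriv (dz k f)"
  by (simp add: dz_def)

lemma dz_Suc_right: "dz (Suc k) f = dz k (deriv f)"
  by (simp only: dz_def funpow_Suc_right comp_def)

lemma dz_dz: "dz k (dz j f) = dz (k + j) f"
  by (simp add: dz_def funpow_add)

lemma differentiable_upto_0: "differentiable_upto 0 f \<longleftrightarrow> (\<forall>x. f field_differentiable (at x))"
  by (simp add: differentiable_upto_def)

lemma differentiable_upto_Suc:
  "differentiable_upto (Suc k) f \<longleftrightarrow>
     (\<forall>x. f field_differentiable (at x)) \<and> differentiable_upto k (deriv f)"
proof -
  have "(\<forall>i\<le>Suc k. P i) \<longleftrightarrow> P 0 \<and> (\<forall>i\<le>k. P (Suc i))" for P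
    by (metis Suc_le_mono le0 not0_implies_Suc)
  then show ?thesis
    unfolding differentiable_upto_def by (simp add: dz_Suc_right)
qed

lemma differentiable_upto_mono: "differentiable_upto k f \<Longrightarrow> i \<le> k \<Longrightarrow> differentiable_upto i f"
  by (simp add: differentiable_upto_def)

lemma C_infinity_iff_differentiable_upto: "C_infinity f \<longleftrightarrow> (\<forall>k. differentiable_upto k f)"
  unfolding C_infinity_def differentiable_upto_def by blast

lemma C_infinity_differentiable: "C_infinity f \<Longrightarrow> f field_differentiable (at x)"
  by (metis C_infinity_def dz_0)

lemma C_infinity_DERIV: "C_infinity f \<Longrightarrow> (f has_real_derivative deriv f x) (at x)"
  by (simp add: C_infinity_differentiable DERIV_deriv_iff_field_differentiable)

lemma C_infinity_continuous_on: "C_infinity f \<Longrightarrow> continuous_on S f"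
  by (meson C_infinity_differentiable continuous_at_imp_continuous_on
      field_differentiable_imp_continuous_at)

lemma C_infinity_integrable: "C_infinity f \<Longrightarrow> f integrable_on {a..b}"
  by (simp add: C_infinity_continuous_on integrable_continuous_interval)

lemma C_infinity_dz: "C_infinity f \<Longrightarrow> C_infinity (dz k f)"
  by (simp add: C_infinity_def dz_dz)

lemma C_infinity_deriv: "C_infinity f \<Longrightarrow> C_infinity (deriv f)"
  using C_infinity_dz[of f 1] by (simp add: dz_Suc)

lemma differentiable_upto_add:
  "differentiable_upto k f \<Longrightarrow> differentiable_upto k g \<Longrightarrow> differentiable_upto k (\<lambda>x. f x + g x)"
proof (induction k arbitrary: f g)
  case 0
  then show ?case by (simp add: differentiable_upto_0 field_differentiable_add)
next
  case (Suc k)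
  then have "deriv (\<lambda>x. f x + g x) = (\<lambda>x. deriv f x + deriv g x)"
    by (auto simp: differentiable_upto_Suc)
  with Suc show ?case by (simp add: differentiable_upto_Suc field_differentiable_add)
qed

lemma differentiable_upto_mult:
  "differentiable_upto k f \<Longrightarrow> differentiable_upto k g \<Longrightarrow> differentiable_upto k (\<lambda>x. f x * g x)"
proof (induction k arbitrary: f g)
  case 0
  then show ?case by (simp add: differentiable_upto_0 field_differentiable_mult)
next
  case (Suc k)
  then have "deriv (\<lambda>x. f x * g x) = (\<lambda>x. f x * deriv g x + deriv f x * g x)"
    by (auto simp: differentiable_upto_Suc)
  moreover have "differentiable_upto k f" "differentiable_upto k g"
    using Suc.prems differentiable_upto_mono le_SucI by blast+
  ultimately show ?case using Suc
    by (simp add: differentiable_upto_Suc field_differentiable_mult differentiable_upto_add)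
qed

lemma differentiable_upto_const: "differentiable_upto k (\<lambda>x. c)"
  by (induction k arbitrary: c) (simp_all add: differentiable_upto_Suc differentiable_upto_0)

lemma differentiable_upto_ident: "differentiable_upto k (\<lambda>x. x)"
  by (cases k) (simp_all add: differentiable_upto_Suc differentiable_upto_0 differentiable_upto_const)

lemma differentiable_upto_sum:
  "finite S \<Longrightarrow> (\<And>i. i \<in> S \<Longrightarrow> differentiable_upto k (f i)) \<Longrightarrow>
     differentiable_upto k (\<lambda>x. \<Sum>i\<in>S. f i x)"
  by (induction S rule: finite_induct) (simp_all add: differentiable_upto_const differentiable_upto_add)

lemma differentiable_upto_compose:
  "C_infinity g \<Longrightarrow> C_infinity f \<Longrightarrow> differentiable_upto k (\<lambda>x. f (g x))"
proof (induction k arbitrary: f)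
  case 0
  then show ?case
    using field_differentiable_compose[of g _ f]
    by (simp add: differentiable_upto_0 C_infinity_differentiable o_def)
next
  case (Suc k)
  then have "deriv (\<lambda>x. f (g x)) = (\<lambda>x. deriv f (g x) * deriv g x)"
    by (intro ext DERIV_imp_deriv DERIV_chain2 C_infinity_DERIV)
  moreover have "differentiable_upto k (\<lambda>x. deriv f (g x) * deriv g x)"
    using Suc.IH[OF Suc.prems(1) C_infinity_deriv[OF Suc.prems(2)]] C_infinity_deriv[OF Suc.prems(1)]
    by (intro differentiable_upto_mult) (auto simp: C_infinity_iff_differentiable_upto)
  ultimately show ?case
    using Suc field_differentiable_compose[of g _ f]
    by (simp add: differentiable_upto_Suc C_infinity_differentiable o_def)
qed

lemma C_infinity_add: "C_infinity f \<Longrightarrow> C_infinity g \<Longrightarrow> C_infinity (\<lambda>x. f x + g x)"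
  by (simp add: C_infinity_iff_differentiable_upto differentiable_upto_add)

lemma C_infinity_mult: "C_infinity f \<Longrightarrow> C_infinity g \<Longrightarrow> C_infinity (\<lambda>x. f x * g x)"
  by (simp add: C_infinity_iff_differentiable_upto differentiable_upto_mult)

lemma C_infinity_const: "C_infinity (\<lambda>x. c)"
  by (simp add: C_infinity_iff_differentiable_upto differentiable_upto_const)

lemma C_infinity_ident: "C_infinity (\<lambda>x. x)"
  by (simp add: C_infinity_iff_differentiable_upto differentiable_upto_ident)

lemma C_infinity_sum:
  "finite S \<Longrightarrow> (\<And>i. i \<in> S \<Longrightarrow> C_infinity (f i)) \<Longrightarrow> C_infinity (\<lambda>x. \<Sum>i\<in>S. f i x)"
  by (simp add: C_infinity_iff_differentiable_upto differentiable_upto_sum)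

lemma C_infinity_compose: "C_infinity g \<Longrightarrow> C_infinity f \<Longrightarrow> C_infinity (\<lambda>x. f (g x))"
  by (simp add: C_infinity_iff_differentiable_upto differentiable_upto_compose)

lemma C_infinity_cmult: "C_infinity f \<Longrightarrow> C_infinity (\<lambda>x. c * f x)"
  by (simp add: C_infinity_mult C_infinity_const)

lemma C_infinity_diff: "C_infinity f \<Longrightarrow> C_infinity g \<Longrightarrow> C_infinity (\<lambda>x. f x - g x)"
  using C_infinity_add[of f "\<lambda>x. (-1) * g x"] C_infinity_cmult[of g "-1"] by simp

lemma integral_sum_C_infinity:
  "finite S \<Longrightarrow> (\<And>i. i \<in> S \<Longrightarrow> C_infinity (f i)) \<Longrightarrow>
     integral {a..b} (\<lambda>z. \<Sum>i\<in>S. f i z) = (\<Sum>i\<in>S. integral {a..b} (f i))"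
  by (rule integral_sum) (auto intro: C_infinity_integrable)

lemma integral_sum3_C_infinity:
  assumes "\<And>i j k. C_infinity (f i j k)" "finite A" "finite B" "finite C"
  shows "integral {a..b} (\<lambda>z. \<Sum>i\<in>A. \<Sum>j\<in>B. \<Sum>k\<in>C. f i j k z)
       = (\<Sum>i\<in>A. \<Sum>j\<in>B. \<Sum>k\<in>C. integral {a..b} (f i j k))"
  using assms by (simp add: integral_sum_C_infinity C_infinity_sum)

lemma integral_mult_const: "integral S (\<lambda>x. c * f x) = c * integral S (f :: _ \<Rightarrow> real)"
  using integral_cmul[of S c f] by simp

lemma dz_add:
  assumes "C_infinity f" "C_infinity g"
  shows "dz k (\<lambda>x. f x + g x) = (\<lambda>x. dz k f x + dz k g x)"
proof (induction k)
  case (Suc k)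
  then show ?case
    using assms by (simp add: dz_Suc) (simp add: fun_eq_iff C_infinity_dz C_infinity_differentiable)
qed simp

lemma dz_cmult:
  assumes "C_infinity f"
  shows "dz k (\<lambda>x. c * f x) = (\<lambda>x. c * dz k f x)"
proof (induction k)
  case (Suc k)
  then show ?case
    using assms by (simp add: dz_Suc) (simp add: fun_eq_iff C_infinity_dz C_infinity_differentiable)
qed simp

lemma dz_const: "dz k (\<lambda>x. c) = (\<lambda>x. if k = 0 then c else 0)"
  by (induction k) (simp_all add: dz_Suc)

lemma dz_sum:
  "finite S \<Longrightarrow> (\<And>i. i \<in> S \<Longrightarrow> C_infinity (f i)) \<Longrightarrow>
     dz k (\<lambda>x. \<Sum>i\<in>S. f i x) = (\<lambda>x. \<Sum>i\<in>S. dz k (f i) x)"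
  by (induction S rule: finite_induct) (simp_all add: dz_const dz_add C_infinity_sum)

lemma dz_cong_open:
  assumes "open S" "\<And>x. x \<in> S \<Longrightarrow> f x = g x" "z \<in> S"
  shows "dz k f z = dz k g z"
  using assms(3)
proof (induction k arbitrary: z)
  case 0
  then show ?case using assms by simp
next
  case (Suc k)
  have "eventually (\<lambda>x. x \<in> S) (nhds z)"
    using assms(1) Suc.prems eventually_nhds_in_open by blast
  then have "eventually (\<lambda>x. dz k f x = dz k g x) (nhds z)"
    by (rule eventually_mono) (use Suc.IH in auto)
  then show ?case by (simp add: dz_Suc deriv_cong_ev)
qed

lemma vanishes_outside_dz: "vanishes_outside c d f \<Longrightarrow> vanishes_outside c d (dz k f)"
  unfolding vanishes_outside_def
proof (intro allI impI)
  fix z assume f: "\<forall>z. z \<notin> {c..d} \<longrightarrow> f z = 0" and z: "z \<notin> {c..d}"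
  have "dz k f z = dz k (\<lambda>_. 0) z"
    by (rule dz_cong_open[of "- {c..d}"]) (use f z in auto)
  then show "dz k f z = 0" by (simp add: dz_const)
qed

section \<open>Smooth functions on Euclidean spaces\<close>

lemma pder_line: "pder b G (y + s *\<^sub>R b) = deriv (\<lambda>s. G (y + s *\<^sub>R b)) s"
proof -
  have "(\<lambda>\<sigma>. G (y + s *\<^sub>R b + \<sigma> *\<^sub>R b)) = (\<lambda>s'. G (y + s' *\<^sub>R b)) \<circ> (\<lambda>\<sigma>. s + \<sigma>)"
    by (simp add: o_def algebra_simps)
  then show ?thesis
    unfolding pder_def by (simp add: deriv_shift_0[symmetric])
qed

lemma dz_line: "dz k (\<lambda>s. F (y + s *\<^sub>R b)) = (\<lambda>s. (pder b ^^ k) F (y + s *\<^sub>R b))"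
proof (induction k arbitrary: F)
  case (Suc k)
  have "deriv (\<lambda>s. F (y + s *\<^sub>R b)) = (\<lambda>s. pder b F (y + s *\<^sub>R b))"
    by (simp add: pder_line)
  then show ?case
    by (simp add: dz_Suc_right Suc.IH funpow_swap1)
qed simp

lemma smooth_pder:
  fixes F :: "'a::euclidean_space \<Rightarrow> real"
  shows "smooth F \<Longrightarrow> b \<in> Basis \<Longrightarrow> smooth (pder b F)"
  unfolding smooth_def
proof (intro allI impI)
  fix bs :: "'a list" assume "\<forall>bs. set bs \<subseteq> Basis \<longrightarrow> continuous_on UNIV (foldr pder bs F) \<and>
      (\<forall>b\<in>Basis. \<forall>y. (\<lambda>s. foldr pder bs F (y + s *\<^sub>R b)) differentiable at 0)"
    and "b \<in> Basis" "set bs \<subseteq> Basis"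
  moreover have "foldr pder bs (pder b F) = foldr pder (bs @ [b]) F" by simp
  ultimately show "continuous_on UNIV (foldr pder bs (pder b F)) \<and>
      (\<forall>b'\<in>Basis. \<forall>y. (\<lambda>s. foldr pder bs (pder b F) (y + s *\<^sub>R b')) differentiable at 0)"
    by (metis Un_least empty_subsetI insert_subset set_append set_simps)
qed

lemma smooth_funpow_pder: "smooth F \<Longrightarrow> b \<in> Basis \<Longrightarrow> smooth ((pder b ^^ k) F)"
  by (induction k) (auto intro: smooth_pder)

lemma smooth_continuous_on: "smooth F \<Longrightarrow> continuous_on S F"
  unfolding smooth_def
  by (metis continuous_on_subset empty_subsetI foldr_Nil id_apply set_empty subset_UNIV)

lemma smooth_line_differentiable:
  assumes "smooth F" "b \<in> Basis"
  shows "(\<lambda>s. F (y + s *\<^sub>R b)) field_differentiable (at s)"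
proof -
  have "(\<lambda>\<sigma>. F ((y + s *\<^sub>R b) + \<sigma> *\<^sub>R b)) differentiable (at 0)"
    using assms unfolding smooth_def by (metis empty_subsetI foldr_Nil id_apply set_empty)
  then have "(\<lambda>\<sigma>. F (y + (\<sigma> + s) *\<^sub>R b)) field_differentiable (at 0)"
    by (simp add: real_differentiable_def field_differentiable_def algebra_simps)
  then show ?thesis
    unfolding field_differentiable_def using DERIV_shift[of "\<lambda>s. F (y + s *\<^sub>R b)" _ 0 s] by simp
qed

lemma C_infinity_line: "smooth F \<Longrightarrow> b \<in> Basis \<Longrightarrow> C_infinity (\<lambda>s. F (y + s *\<^sub>R b))"
  unfolding C_infinity_def dz_line by (simp add: smooth_line_differentiable smooth_funpow_pder)

lemma smooth_real_iff_C_infinity: "smooth (f :: real \<Rightarrow> real) \<longleftrightarrow> C_infinity f"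
proof
  assume "smooth f"
  then show "C_infinity f" using C_infinity_line[of f 1 0] by simp
next
  assume f: "C_infinity f"
  have pder_dz: "foldr pder bs f = dz (length bs) f" if "set bs \<subseteq> Basis" for bs
  proof -
    have "bs = replicate (length bs) 1"
      using that by (induction bs) (auto simp: Basis_real_def)
    moreover have "foldr pder (replicate k 1) f = dz k f" for k
      using dz_line[of k f 0 1] by (induction k) auto
    ultimately show ?thesis by metis
  qed
  have "(\<lambda>s. dz k f (y + s *\<^sub>R b)) differentiable (at 0)" if "b \<in> Basis" for b y k
  proof -
    have "((\<lambda>s. dz k f (s + y)) has_real_derivative deriv (dz k f) y) (at 0)"
      using DERIV_shift[of "dz k f" _ 0 y] C_infinity_DERIV[OF C_infinity_dz[OF f], of k y] by simp
    then show ?thesis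
      using that by (auto simp: Basis_real_def real_differentiable_def add.commute)
  qed
  then show "smooth f"
    unfolding smooth_def using pder_dz C_infinity_continuous_on[OF C_infinity_dz[OF f]] by simp
qed

lemma Basis_real_prod: "(1, 0) \<in> (Basis :: (real \<times> real) set)" "(0, 1) \<in> (Basis :: (real \<times> real) set)"
  by (auto simp: Basis_prod_def)

lemma pder_fst:
  fixes G :: "real \<times> real \<Rightarrow> real"
  shows "pder (1, 0) G (t, z) = deriv (\<lambda>s. G (s, z)) t"
  using pder_line[of "(1, 0)" G "(0, z)" t] by simp

lemma pder_snd:
  fixes G :: "real \<times> real \<Rightarrow> real"
  shows "pder (0, 1) G (t, z) = deriv (\<lambda>s. G (t, s)) z"
  using pder_line[of "(0, 1)" G "(t, 0)" z] by simp

lemma DERIV_fst: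
  fixes G :: "real \<times> real \<Rightarrow> real"
  shows "smooth G \<Longrightarrow> ((\<lambda>s. G (s, z)) has_real_derivative pder (1, 0) G (t, z)) (at t)"
  using smooth_line_differentiable[OF _ Basis_real_prod(1), of G "(0, z)" t]
  by (simp add: pder_fst DERIV_deriv_iff_field_differentiable)

lemma DERIV_snd:
  fixes G :: "real \<times> real \<Rightarrow> real"
  shows "smooth G \<Longrightarrow> ((\<lambda>s. G (t, s)) has_real_derivative pder (0, 1) G (t, z)) (at z)"
  using smooth_line_differentiable[OF _ Basis_real_prod(2), of G "(t, 0)" z]
  by (simp add: pder_snd DERIV_deriv_iff_field_differentiable)

lemma dz_snd:
  fixes G :: "real \<times> real \<Rightarrow> real"
  shows "dz j (\<lambda>w. G (t, w)) z = (pder (0, 1) ^^ j) G (t, z)"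
  using dz_line[of j G "(t, 0)" "(0, 1)"] by (simp add: fun_eq_iff)

lemma C_infinity_snd:
  fixes G :: "real \<times> real \<Rightarrow> real"
  shows "smooth G \<Longrightarrow> C_infinity (\<lambda>z. G (t, z))"
  using C_infinity_line[OF _ Basis_real_prod(2), of G "(t, 0)"] by simp

definition grad :: "(real^'n \<Rightarrow> real) \<Rightarrow> real^'n \<Rightarrow> real^'n" where
  "grad F y = (\<chi> r. pder (axis r 1) F y)"

definition coords_in :: "'n set \<Rightarrow> real^'n \<Rightarrow> real^'n" where
  "coords_in S h = (\<chi> i. if i \<in> S then h $ i else 0)"

lemma axis_1_in_Basis: "axis r (1::real) \<in> Basis"
  by (simp add: Basis_real_def)

text \<open>Moving one coordinate at a time, the mean value theorem bounds the error of the linear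
  approximation by the oscillation of the partial derivatives; their continuity then gives
  Frechet differentiability.\<close>

lemma smooth_increment_bound:
  fixes F :: "real^'n \<Rightarrow> real"
  assumes F: "smooth F" and "finite S"
    and grad_near: "\<And>\<xi> r. norm (\<xi> - y) < \<delta> \<Longrightarrow> \<bar>pder (axis r 1) F \<xi> - grad F y $ r\<bar> \<le> \<epsilon>"
    and h: "(\<Sum>i\<in>UNIV. \<bar>h $ i\<bar>) < \<delta>"
  shows "\<bar>F (y + coords_in S h) - F y - (\<Sum>r\<in>S. h $ r * grad F y $ r)\<bar> \<le> (\<Sum>r\<in>S. \<bar>h $ r\<bar>) * \<epsilon>"
  using \<open>finite S\<close>
proof (induction S rule: finite_induct)
  case empty
  have "coords_in {} h = 0" by (simp add: coords_in_def vec_eq_iff)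
  then show ?case by simp
next
  case (insert a S)
  define w where "w = y + coords_in S h"
  define \<psi> where "\<psi> s = F (w + s *\<^sub>R axis a 1) - s * grad F y $ a" for s
  have coords_insert: "coords_in (insert a S) h = coords_in S h + h $ a *\<^sub>R axis a 1"
    using insert.hyps by (auto simp: coords_in_def vec_eq_iff axis_def)
  have \<psi>_deriv: "(\<psi> has_real_derivative (pder (axis a 1) F (w + s *\<^sub>R axis a 1) - grad F y $ a)) (at s)"
    for s
    using smooth_line_differentiable[OF F axis_1_in_Basis[of a], of w s]
    unfolding \<psi>_def by (auto simp: DERIV_deriv_iff_field_differentiable[symmetric] pder_line
        intro!: derivative_eq_intros)
  have \<psi>_deriv_bound: "\<bar>pder (axis a 1) F (w + s *\<^sub>R axis a 1) - grad F y $ a\<bar> \<le> \<epsilon>"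
    if s: "s \<in> closed_segment 0 (h $ a)" for s
  proof (rule grad_near)
    have sa: "\<bar>s\<bar> \<le> \<bar>h $ a\<bar>"
      using s by (auto simp: closed_segment_eq_real_ivl split: if_splits)
    have "norm (w + s *\<^sub>R axis a 1 - y) \<le> (\<Sum>i\<in>UNIV. \<bar>(coords_in S h + s *\<^sub>R axis a 1) $ i\<bar>)"
      using norm_le_l1_cart[of "coords_in S h + s *\<^sub>R axis a 1"] by (simp add: w_def)
    also have "\<dots> \<le> (\<Sum>i\<in>UNIV. \<bar>h $ i\<bar>)"
      by (rule sum_mono) (use insert.hyps sa in \<open>auto simp: coords_in_def axis_def\<close>)
    finally show "norm (w + s *\<^sub>R axis a 1 - y) < \<delta>" using h by simp
  qed
  have "norm (\<psi> (h $ a) - \<psi> 0) \<le> \<epsilon> * norm (h $ a - 0)"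
    by (rule field_differentiable_bound[of "closed_segment 0 (h $ a)" \<psi>
          "\<lambda>s. pder (axis a 1) F (w + s *\<^sub>R axis a 1) - grad F y $ a"])
       (use \<psi>_deriv \<psi>_deriv_bound in \<open>auto intro: has_field_derivative_at_within\<close>)
  then have "\<bar>F (w + h $ a *\<^sub>R axis a 1) - F w - h $ a * grad F y $ a\<bar> \<le> \<bar>h $ a\<bar> * \<epsilon>"
    by (simp add: \<psi>_def mult.commute)
  moreover have "y + coords_in (insert a S) h = w + h $ a *\<^sub>R axis a 1"
    by (simp add: coords_insert w_def add.assoc)
  ultimately show ?case
    using insert by (simp add: w_def distrib_right add.assoc)
qed

lemma smooth_has_derivative:
  fixes F :: "real^'n \<Rightarrow> real"
  assumes F: "smooth F"
  shows "(F has_derivative (\<lambda>h. h \<bullet> grad F y)) (at y)"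
  unfolding has_derivative_at_alt
proof (intro conjI allI impI)
  show "bounded_linear (\<lambda>h. h \<bullet> grad F y)"
    by (simp add: bounded_linear_inner_left)
next
  fix e :: real assume e: "e > 0"
  define \<Phi> where "\<Phi> \<xi> = (\<Sum>r\<in>UNIV. \<bar>pder (axis r 1) F \<xi> - grad F y $ r\<bar>)" for \<xi>
  have "continuous_on UNIV \<Phi>"
    unfolding \<Phi>_def
    by (intro continuous_intros smooth_continuous_on smooth_pder[OF F axis_1_in_Basis])
  then have "isCont \<Phi> y" by (simp add: continuous_on_eq_continuous_at)
  moreover have "\<Phi> y = 0" by (simp add: \<Phi>_def grad_def)
  moreover define \<epsilon> where "\<epsilon> = e / real CARD('n)"
  moreover have \<epsilon>: "\<epsilon> > 0" using e by (simp add: \<epsilon>_def)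
  ultimately obtain \<delta> where \<delta>: "\<delta> > 0" "\<And>\<xi>. dist \<xi> y < \<delta> \<Longrightarrow> dist (\<Phi> \<xi>) 0 < \<epsilon>"
    unfolding continuous_at_eps_delta by metis
  have grad_near: "\<bar>pder (axis r 1) F \<xi> - grad F y $ r\<bar> \<le> \<epsilon>" if "norm (\<xi> - y) < \<delta>" for \<xi> r
  proof -
    have "\<bar>pder (axis r 1) F \<xi> - grad F y $ r\<bar> \<le> \<Phi> \<xi>"
      unfolding \<Phi>_def by (rule member_le_sum) auto
    also have "\<Phi> \<xi> < \<epsilon>" using \<delta>(2)[of \<xi>] that by (simp add: dist_norm)
    finally show ?thesis by simp
  qed
  show "\<exists>d>0. \<forall>y'. norm (y' - y) < d \<longrightarrow>
          norm (F y' - F y - (y' - y) \<bullet> grad F y) \<le> e * norm (y' - y)"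
  proof (intro exI conjI allI impI)
    show "\<delta> / real CARD('n) > 0" using \<delta> by simp
    fix y' assume y': "norm (y' - y) < \<delta> / real CARD('n)"
    define h where "h = y' - y"
    have l1: "(\<Sum>i\<in>UNIV. \<bar>h $ i\<bar>) \<le> real CARD('n) * norm h"
      using sum_bounded_above[of UNIV "\<lambda>i. \<bar>h $ i\<bar>" "norm h"] component_le_norm_cart by auto
    also have "\<dots> < \<delta>" using y' by (simp add: h_def field_simps)
    finally have h_small: "(\<Sum>i\<in>UNIV. \<bar>h $ i\<bar>) < \<delta>" .
    have "coords_in UNIV h = h" by (simp add: coords_in_def)
    then have "\<bar>F (y + h) - F y - h \<bullet> grad F y\<bar> \<le> (\<Sum>r\<in>UNIV. \<bar>h $ r\<bar>) * \<epsilon>"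
      using smooth_increment_bound[OF F finite_class.finite_UNIV grad_near h_small]
      by (simp add: inner_vec_def)
    also have "\<dots> \<le> (real CARD('n) * norm h) * \<epsilon>"
      using l1 \<epsilon> by (simp add: mult_right_mono)
    also have "\<dots> = e * norm h" by (simp add: \<epsilon>_def)
    finally show "norm (F y' - F y - (y' - y) \<bullet> grad F y) \<le> e * norm (y' - y)"
      by (simp add: h_def)
  qed
qed

lemma vec_has_vector_derivative:
  fixes \<gamma> :: "real \<Rightarrow> real^'n"
  assumes "\<And>r. ((\<lambda>z. \<gamma> z $ r) has_real_derivative \<gamma>' $ r) (at z)"
  shows "(\<gamma> has_vector_derivative \<gamma>') (at z)"
  unfolding has_vector_derivative_def
proof (subst has_derivative_componentwise_within, intro ballI)
  fix b :: "real^'n" assume "b \<in> Basis"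
  then obtain i where b: "b = axis i 1" by (auto simp: Basis_vec_def Basis_real_def)
  show "((\<lambda>x. \<gamma> x \<bullet> b) has_derivative (\<lambda>x. (x *\<^sub>R \<gamma>') \<bullet> b)) (at z)"
    using assms[of i] by (simp add: b inner_axis has_field_derivative_def mult_commute_abs)
qed

lemma smooth_compose_DERIV:
  fixes F :: "real^'n \<Rightarrow> real"
  assumes "smooth F" "(\<gamma> has_vector_derivative \<gamma>') (at z)"
  shows "((\<lambda>z. F (\<gamma> z)) has_real_derivative \<gamma>' \<bullet> grad F (\<gamma> z)) (at z)"
proof -
  have "((F \<circ> \<gamma>) has_derivative ((\<lambda>h. h \<bullet> grad F (\<gamma> z)) \<circ> (\<lambda>d. d *\<^sub>R \<gamma>'))) (at z)"
    using assms by (intro diff_chain_at smooth_has_derivative) (simp_all add: has_vector_derivative_def)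
  then show ?thesis
    by (simp add: has_field_derivative_def o_def mult_commute_abs)
qed

lemma differentiable_upto_smooth_compose:
  fixes F :: "real^'n \<Rightarrow> real"
  assumes \<gamma>: "C_infinity_vec \<gamma>"
  shows "smooth F \<Longrightarrow> differentiable_upto k (\<lambda>z. F (\<gamma> z))"
proof -
  define \<gamma>' where "\<gamma>' x = (\<chi> r. deriv (\<lambda>z. \<gamma> z $ r) x)" for x
  have \<gamma>': "(\<gamma> has_vector_derivative \<gamma>' x) (at x)" for x
    using \<gamma> by (intro vec_has_vector_derivative) (simp add: \<gamma>'_def C_infinity_vec_def C_infinity_DERIV)
  have \<gamma>_deriv: "C_infinity (deriv (\<lambda>z. \<gamma> z $ r))" for r
    using \<gamma> by (simp add: C_infinity_vec_def C_infinity_deriv)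
  show "smooth F \<Longrightarrow> differentiable_upto k (\<lambda>z. F (\<gamma> z))"
  proof (induction k arbitrary: F)
    case 0
    then show ?case
      using smooth_compose_DERIV[OF 0 \<gamma>'] by (auto simp: differentiable_upto_0 field_differentiable_def)
  next
    case (Suc k)
    have "deriv (\<lambda>z. F (\<gamma> z)) = (\<lambda>z. \<Sum>r\<in>UNIV. deriv (\<lambda>z. \<gamma> z $ r) z * pder (axis r 1) F (\<gamma> z))"
      using smooth_compose_DERIV[OF Suc.prems \<gamma>']
      by (intro ext DERIV_imp_deriv) (simp add: inner_vec_def \<gamma>'_def grad_def)
    moreover have "differentiable_upto k (\<lambda>z. \<Sum>r\<in>UNIV. deriv (\<lambda>z. \<gamma> z $ r) z * pder (axis r 1) F (\<gamma> z))"
      using \<gamma>_deriv Suc.IH[OF smooth_pder[OF Suc.prems axis_1_in_Basis]]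
      by (intro differentiable_upto_sum differentiable_upto_mult)
        (auto simp: C_infinity_iff_differentiable_upto)
    ultimately show ?case
      using smooth_compose_DERIV[OF Suc.prems \<gamma>']
      by (auto simp: differentiable_upto_Suc field_differentiable_def)
  qed
qed

lemma C_infinity_smooth_compose: "C_infinity_vec \<gamma> \<Longrightarrow> smooth F \<Longrightarrow> C_infinity (\<lambda>z. F (\<gamma> z))"
  by (simp add: C_infinity_iff_differentiable_upto differentiable_upto_smooth_compose)

section \<open>The fundamental lemma of the calculus of variations\<close>

text \<open>\<open>flat_fun k\<close> is the \<open>k\<close>-th derivative of the flat function \<open>exp (-1/x)\<close> (zero for
  \<open>x \<le> 0\<close>); the recursion for \<open>flat_poly\<close> comes from differentiating \<open>p (1/x) exp (-1/x)\<close>.\<close>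

primrec flat_poly :: "nat \<Rightarrow> real poly" where
  "flat_poly 0 = 1"
| "flat_poly (Suc k) = [:0, 0, 1:] * (flat_poly k - pderiv (flat_poly k))"

definition flat_fun :: "nat \<Rightarrow> real \<Rightarrow> real" where
  "flat_fun k x = (if x > 0 then poly (flat_poly k) (inverse x) * exp (- inverse x) else 0)"

lemma tendsto_poly_mult_exp_neg_at_top:
  fixes q :: "real poly"
  shows "((\<lambda>u. poly q u * exp (- u)) \<longlongrightarrow> 0) at_top"
proof -
  have "poly q u * exp (- u) = (\<Sum>i\<le>degree q. coeff q i * (u ^ i / exp u))" for u :: real
    by (simp add: poly_altdef exp_minus sum_distrib_right divide_inverse mult.assoc)
  moreover have "((\<lambda>u. \<Sum>i\<le>degree q. coeff q i * (u ^ i / exp u)) \<longlongrightarrow> (\<Sum>i\<le>degree q. coeff q i * 0)) at_top"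
    by (intro tendsto_sum tendsto_mult_left tendsto_power_div_exp_0)
  ultimately show ?thesis by simp
qed

lemma tendsto_poly_inverse_mult_exp_at_right_0:
  fixes q :: "real poly"
  shows "((\<lambda>x. poly q (inverse x) * exp (- inverse x)) \<longlongrightarrow> 0) (at_right 0)"
  using filterlim_compose[OF tendsto_poly_mult_exp_neg_at_top filterlim_inverse_at_top_right] by simp

lemma flat_fun_DERIV: "(flat_fun k has_real_derivative flat_fun (Suc k) x) (at x)"
proof -
  consider "x > 0" | "x < 0" | "x = 0" by linarith
  then show ?thesis
  proof cases
    case 1
    define p where "p = flat_poly k"
    have D: "((\<lambda>x. poly p (inverse x) * exp (- inverse x)) has_real_derivative
        poly (pderiv p) (inverse x) * (- (inverse x ^ 2)) * exp (- inverse x) +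
        poly p (inverse x) * (exp (- inverse x) * inverse x ^ 2)) (at x)"
      using 1 by (auto intro!: derivative_eq_intros DERIV_chain2[OF poly_DERIV]
          simp: power2_eq_square field_simps)
    have eq: "poly (pderiv p) (inverse x) * (- (inverse x ^ 2)) * exp (- inverse x) +
        poly p (inverse x) * (exp (- inverse x) * inverse x ^ 2) = flat_fun (Suc k) x"
      using 1 by (simp add: flat_fun_def p_def algebra_simps power2_eq_square)
    show ?thesis
      using has_field_derivative_transform_within_open[OF D[unfolded eq], of "{0<..}" "flat_fun k"] 1
      by (auto simp: flat_fun_def p_def)
  next
    case 2
    have "((\<lambda>x. 0) has_real_derivative 0) (at x)" by simp
    then have "(flat_fun k has_real_derivative 0) (at x)"
      by (rule has_field_derivative_transform_within_open[of _ _ _ "{..<0}"])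
         (use 2 in \<open>auto simp: flat_fun_def\<close>)
    then show ?thesis using 2 by (simp add: flat_fun_def)
  next
    case 3
    have "((\<lambda>h. (flat_fun k (0 + h) - flat_fun k 0) / h) \<longlongrightarrow> 0) (at 0)"
    proof (rule filterlim_split_at)
      show "((\<lambda>h. (flat_fun k (0 + h) - flat_fun k 0) / h) \<longlongrightarrow> 0) (at_left 0)"
        using eventually_at_left_real[of "-1" 0]
        by (intro Lim_transform_eventually[OF tendsto_const])
          (auto elim!: eventually_mono simp: flat_fun_def)
      show "((\<lambda>h. (flat_fun k (0 + h) - flat_fun k 0) / h) \<longlongrightarrow> 0) (at_right 0)"
        using eventually_at_right_less[of "0::real"]
        by (intro Lim_transform_eventually
            [OF tendsto_poly_inverse_mult_exp_at_right_0[of "[:0, 1:] * flat_poly k"]])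
          (auto elim!: eventually_mono simp: flat_fun_def field_simps)
    qed
    then show ?thesis using 3 by (simp add: DERIV_def flat_fun_def)
  qed
qed

lemma dz_flat_fun: "dz k (flat_fun 0) = flat_fun k"
proof (induction k)
  case (Suc k)
  then show ?case
    by (simp add: dz_Suc) (simp add: fun_eq_iff DERIV_imp_deriv[OF flat_fun_DERIV])
qed simp

lemma C_infinity_flat_fun: "C_infinity (flat_fun 0)"
  unfolding C_infinity_def dz_flat_fun field_differentiable_def using flat_fun_DERIV by blast

definition bump :: "real \<Rightarrow> real \<Rightarrow> real \<Rightarrow> real" where
  "bump z0 \<delta> z = flat_fun 0 (\<delta>\<^sup>2 - (z - z0)\<^sup>2)"

lemma C_infinity_bump: "C_infinity (bump z0 \<delta>)"
proof -
  have "C_infinity (\<lambda>z. \<delta>\<^sup>2 - (z - z0) * (z - z0))"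
    by (intro C_infinity_diff C_infinity_mult C_infinity_const C_infinity_ident)
  then show ?thesis
    unfolding bump_def[abs_def] power2_eq_square[of "_ - z0"]
    by (rule C_infinity_compose[OF _ C_infinity_flat_fun])
qed

lemma bump_nonneg: "bump z0 \<delta> z \<ge> 0"
  by (simp add: bump_def flat_fun_def)

lemma bump_pos: "\<delta> \<noteq> 0 \<Longrightarrow> bump z0 \<delta> z0 > 0"
  by (simp add: bump_def flat_fun_def)

lemma bump_eq_0: "\<bar>z - z0\<bar> \<ge> \<bar>\<delta>\<bar> \<Longrightarrow> bump z0 \<delta> z = 0"
  by (simp add: bump_def flat_fun_def abs_le_square_iff)

lemma isCont_sign_persists:
  fixes h :: "real \<Rightarrow> real"
  assumes "isCont h z0" "h z0 \<noteq> 0" "a < z0" "z0 < b"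
  shows "\<exists>\<delta>>0. a < z0 - \<delta> \<and> z0 + \<delta> < b \<and> (\<forall>z. \<bar>z - z0\<bar> < \<delta> \<longrightarrow> h z0 * h z > 0)"
proof -
  obtain \<delta>0 where \<delta>0: "\<delta>0 > 0" "\<And>z. dist z z0 < \<delta>0 \<Longrightarrow> dist (h z) (h z0) < \<bar>h z0\<bar>"
    using assms(1,2) unfolding continuous_at_eps_delta by (metis zero_less_abs_iff)
  define \<delta> where "\<delta> = min \<delta>0 (min (z0 - a) (b - z0)) / 2"
  have "min \<delta>0 (min (z0 - a) (b - z0)) > 0" "min \<delta>0 (min (z0 - a) (b - z0)) \<le> \<delta>0"
    "min \<delta>0 (min (z0 - a) (b - z0)) \<le> z0 - a" "min \<delta>0 (min (z0 - a) (b - z0)) \<le> b - z0"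
    using \<delta>0 assms(3,4) by auto
  then have \<delta>: "\<delta> > 0" "\<delta> < \<delta>0" "a < z0 - \<delta>" "z0 + \<delta> < b"
    unfolding \<delta>_def by linarith+
  have "h z0 * h z > 0" if "\<bar>z - z0\<bar> < \<delta>" for z
  proof -
    have "\<bar>h z - h z0\<bar> < \<bar>h z0\<bar>"
      using \<delta>0(2)[of z] \<delta> that by (simp add: dist_real_def)
    then show ?thesis
      by (cases "h z0 > 0") (auto simp: abs_if zero_less_mult_iff split: if_splits)
  qed
  with \<delta> show ?thesis by blast
qed

lemma fundamental_lemma_calculus_of_variations:
  fixes h :: "real \<Rightarrow> real"
  assumes cont: "continuous_on {a..b} h" and z0: "z0 \<in> {a<..<b}"
    and orth: "\<And>\<phi> c d. C_infinity \<phi> \<Longrightarrow> a < c \<Longrightarrow> c \<le> d \<Longrightarrow> d < b \<Longrightarrow> vanishes_outside c d \<phi>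
       \<Longrightarrow> integral {a..b} (\<lambda>z. h z * \<phi> z) = 0"
  shows "h z0 = 0"
proof (rule ccontr)
  assume nz: "h z0 \<noteq> 0"
  have "isCont h z0"
    using cont z0 by (simp add: continuous_on_interior)
  from isCont_sign_persists[OF this nz, of a b] z0 obtain \<delta> where \<delta>: "\<delta> > 0" "a < z0 - \<delta>" "z0 + \<delta> < b"
    and sign: "\<And>z. \<bar>z - z0\<bar> < \<delta> \<Longrightarrow> h z0 * h z > 0"
    by auto
  text \<open>\<open>h z0 * h * bump\<close> is then nonnegative and continuous with integral zero, yet positive at \<open>z0\<close>.\<close>
  define f where "f z = h z0 * (h z * bump z0 \<delta> z)" for z
  have f_nonneg: "0 \<le> f z" for z
  proof (cases "\<bar>z - z0\<bar> < \<delta>")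
    case True
    then show ?thesis
      unfolding f_def using sign[OF True] bump_nonneg
      by (metis mult.assoc mult_nonneg_nonneg less_imp_le)
  qed (use \<delta> in \<open>simp add: f_def bump_eq_0\<close>)
  have "vanishes_outside (z0 - \<delta>) (z0 + \<delta>) (bump z0 \<delta>)"
    using \<delta> by (auto simp: vanishes_outside_def intro!: bump_eq_0)
  then have "integral {a..b} (\<lambda>z. h z * bump z0 \<delta> z) = 0"
    using \<delta> by (intro orth C_infinity_bump) auto
  then have "integral {a..b} f = 0" by (simp add: f_def[abs_def])
  moreover have f_cont: "continuous_on {a..b} f"
    unfolding f_def
    by (intro continuous_intros cont C_infinity_continuous_on[OF C_infinity_bump])
  ultimately have "(f has_integral 0) {a..b}"
    using integrable_continuous_interval by (metis has_integral_integral)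
  then have "f z0 = 0"
    using has_integral_0_cbox_imp_0[of a b f z0] f_cont f_nonneg z0 by (simp add: box_real)
  then show False
    using nz bump_pos[of \<delta> z0] \<delta> by (simp add: f_def)
qed

section \<open>Integration by parts\<close>

lemma integral_by_parts_C_infinity:
  assumes u: "C_infinity u" and v: "C_infinity v" and "a \<le> b"
    and "u a * v a = 0" "u b * v b = 0"
  shows "integral {a..b} (\<lambda>z. u z * deriv v z) = - integral {a..b} (\<lambda>z. deriv u z * v z)"
proof -
  define J where "J = integral {a..b} (\<lambda>z. u z * deriv v z)"
  have "(\<lambda>z. u z * deriv v z) integrable_on {a..b}"
    using u v by (intro C_infinity_integrable C_infinity_mult C_infinity_deriv)
  then have "((\<lambda>z. u z * deriv v z) has_integral (u b * v b - u a * v a - (- J))) {a..b}"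
    by (simp add: assms(4,5) J_def has_integral_integral)
  moreover have "(f has_vector_derivative deriv f x) (at x)" if "C_infinity f" for f x
    using C_infinity_DERIV[OF that] by (simp add: has_real_derivative_iff_has_vector_derivative)
  ultimately have "((\<lambda>z. deriv u z * v z) has_integral (- J)) {a..b}"
    using integration_by_parts[OF bounded_bilinear_mult \<open>a \<le> b\<close>
        C_infinity_continuous_on[OF u] C_infinity_continuous_on[OF v]] u v
    by blast
  then show ?thesis by (simp add: J_def integral_unique)
qed

text \<open>Boundary terms vanish as soon as one of the two factors is supported inside \<open>(a, b)\<close>.\<close>

lemma integral_by_parts_dz:
  assumes "C_infinity v" and cd: "a < c" "c \<le> d" "d < b"
  shows "C_infinity u \<Longrightarrow> vanishes_outside c d u \<or> vanishes_outside c d v \<Longrightarrow>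
    integral {a..b} (\<lambda>z. u z * dz N v z) = (-1) ^ N * integral {a..b} (\<lambda>z. dz N u z * v z)"
proof (induction N arbitrary: u)
  case (Suc N)
  have "a \<notin> {c..d}" "b \<notin> {c..d}" using cd by auto
  then have "u a * dz N v a = 0" "u b * dz N v b = 0"
    using Suc.prems(2) vanishes_outside_dz[of c d v N] by (auto simp: vanishes_outside_def)
  then have "integral {a..b} (\<lambda>z. u z * dz (Suc N) v z) = - integral {a..b} (\<lambda>z. deriv u z * dz N v z)"
    unfolding dz_Suc using Suc.prems(1) assms cd
    by (intro integral_by_parts_C_infinity C_infinity_dz) auto
  also have "\<dots> = - ((-1) ^ N * integral {a..b} (\<lambda>z. dz N (deriv u) z * v z))"
    using Suc.prems vanishes_outside_dz[of c d u 1]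
    by (subst Suc.IH) (auto simp: C_infinity_deriv dz_Suc)
  finally show ?case by (simp add: dz_Suc_right)
qed simp

section \<open>The extended state and its formal adjoint\<close>

text \<open>\<open>extended_state I\<close> is the map \<open>E\<close> and \<open>extended_state_adjoint I\<close> the map \<open>E^*\<close>.\<close>

definition extended_state :: "('l \<Rightarrow> 'n \<times> nat) \<Rightarrow> (real \<Rightarrow> real^'n) \<Rightarrow> real \<Rightarrow> real^'l" where
  "extended_state I x z = (\<chi> p. dz (snd (I p)) (\<lambda>w. x w $ fst (I p)) z)"

definition extended_state_adjoint ::
    "('l::finite \<Rightarrow> 'n \<times> nat) \<Rightarrow> (real \<Rightarrow> real^'l) \<Rightarrow> real \<Rightarrow> real^'n" where
  "extended_state_adjoint I f z =
     (\<chi> c. \<Sum>q | fst (I q) = c. (-1) ^ snd (I q) * dz (snd (I q)) (\<lambda>w. f w $ q) z)"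

lemma sum_fibres_UNIV:
  fixes g :: "'a::finite \<Rightarrow> 'b::finite"
  shows "(\<Sum>c\<in>UNIV. \<Sum>q | g q = c. h q) = (\<Sum>q\<in>UNIV. h q)"
  using sum.group[of UNIV UNIV g h] by simp

lemma vanishes_outside_vec_iff:
  "vanishes_outside c d f \<longleftrightarrow> (\<forall>i. vanishes_outside c d (\<lambda>z. f z $ i))"
  by (auto simp: vanishes_outside_def vec_eq_iff)

lemma test_fun_iff:
  "test_fun a b \<eta> \<longleftrightarrow> C_infinity_vec \<eta> \<and> (\<exists>c d. a < c \<and> c \<le> d \<and> d < b \<and> vanishes_outside c d \<eta>)"
  by (simp add: test_fun_def smooth_real_iff_C_infinity C_infinity_vec_def vanishes_outside_def)

lemma C_infinity_vec_extended_state: "C_infinity_vec x \<Longrightarrow> C_infinity_vec (extended_state I x)"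
  by (simp add: C_infinity_vec_def extended_state_def C_infinity_dz)

lemma C_infinity_vec_extended_state_adjoint:
  "C_infinity_vec f \<Longrightarrow> C_infinity_vec (extended_state_adjoint I f)"
  by (simp add: C_infinity_vec_def extended_state_adjoint_def
      C_infinity_sum C_infinity_cmult C_infinity_dz)

lemma vanishes_outside_extended_state_adjoint:
  assumes "vanishes_outside c d f"
  shows "vanishes_outside c d (extended_state_adjoint I f)"
proof -
  have "dz k (\<lambda>w. f w $ q) z = 0" if "z \<notin> {c..d}" for k q z
    using assms vanishes_outside_dz[of c d "\<lambda>w. f w $ q" k] that
    by (simp add: vanishes_outside_vec_iff vanishes_outside_def)
  then show ?thesis
    by (simp add: vanishes_outside_def extended_state_adjoint_def vec_eq_iff)
qed

lemma extended_state_add_scaleR: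
  assumes "C_infinity_vec x" "C_infinity_vec \<eta>"
  shows "extended_state I (\<lambda>z. x z + \<epsilon> *\<^sub>R \<eta> z) z = extended_state I x z + \<epsilon> *\<^sub>R extended_state I \<eta> z"
  using assms
  by (simp add: extended_state_def vec_eq_iff C_infinity_vec_def dz_add dz_cmult C_infinity_cmult)

lemma integral_inner_extended_state:
  fixes u :: "real \<Rightarrow> real^'n" and v :: "real \<Rightarrow> real^'l::finite"
  assumes u: "C_infinity_vec u" and v: "C_infinity_vec v" and cd: "a < c" "c \<le> d" "d < b"
    and supp: "vanishes_outside c d u \<or> vanishes_outside c d v"
  shows "integral {a..b} (\<lambda>z. extended_state I u z \<bullet> v z)
       = integral {a..b} (\<lambda>z. u z \<bullet> extended_state_adjoint I v z)"
proof -
  define U where "U q = (\<lambda>z. u z $ fst (I q))" for q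
  define V where "V q = (\<lambda>z. v z $ q)" for q
  have U: "C_infinity (U q)" and V: "C_infinity (V q)" for q
    using u v by (simp_all add: U_def V_def C_infinity_vec_def)
  have by_parts: "integral {a..b} (\<lambda>z. dz (snd (I q)) (U q) z * V q z)
      = (-1) ^ snd (I q) * integral {a..b} (\<lambda>z. U q z * dz (snd (I q)) (V q) z)" for q
    using integral_by_parts_dz[OF V cd U, where N = "snd (I q)"] supp
    by (auto simp: U_def V_def vanishes_outside_vec_iff)
  have "integral {a..b} (\<lambda>z. extended_state I u z \<bullet> v z)
      = (\<Sum>q\<in>UNIV. integral {a..b} (\<lambda>z. dz (snd (I q)) (U q) z * V q z))"
    unfolding extended_state_def inner_vec_def U_def V_def
    using U V by (simp add: integral_sum_C_infinity C_infinity_mult C_infinity_dz U_def V_def)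
  also have "\<dots> = (\<Sum>q\<in>UNIV. (-1) ^ snd (I q) * integral {a..b} (\<lambda>z. U q z * dz (snd (I q)) (V q) z))"
    by (simp add: by_parts)
  also have "\<dots> = (\<Sum>c\<in>UNIV. \<Sum>q | fst (I q) = c.
      integral {a..b} (\<lambda>z. (-1) ^ snd (I q) * (u z $ c * dz (snd (I q)) (V q) z)))"
    by (subst sum_fibres_UNIV[where g = "\<lambda>q. fst (I q)", symmetric]) (simp add: U_def)
  also have "\<dots> = integral {a..b} (\<lambda>z. u z \<bullet> extended_state_adjoint I v z)"
    unfolding extended_state_adjoint_def inner_vec_def V_def
    using u v
    by (simp add: sum_distrib_left integral_sum_C_infinity C_infinity_sum C_infinity_mult
        C_infinity_cmult C_infinity_dz C_infinity_vec_def mult_ac)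
  finally show ?thesis .
qed

section \<open>Skew-adjointness of the lifted operator\<close>

lemma C_infinity_Jentry: "C_infinity f \<Longrightarrow> C_infinity (Jentry P m r c f)"
  by (simp add: Jentry_def[abs_def] C_infinity_sum C_infinity_cmult C_infinity_dz)

lemma Jentry_sum:
  "finite Q \<Longrightarrow> (\<And>q. q \<in> Q \<Longrightarrow> C_infinity (\<psi> q)) \<Longrightarrow>
     Jentry P m r c (\<lambda>w. \<Sum>q\<in>Q. \<psi> q w) z = (\<Sum>q\<in>Q. Jentry P m r c (\<psi> q) z)"
  by (simp add: Jentry_def dz_sum sum_distrib_left sum.swap[of _ Q])

lemma C_infinity_vec_Jop: "C_infinity_vec g \<Longrightarrow> C_infinity_vec (Jop P m g)"
  by (simp add: C_infinity_vec_def Jop_def C_infinity_sum C_infinity_Jentry)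

lemma Jop_cong_open:
  assumes "open S" "\<And>w. w \<in> S \<Longrightarrow> f w = g w" "z \<in> S"
  shows "Jop P m f z = Jop P m g z"
proof -
  have "dz k (\<lambda>w. f w $ c) z = dz k (\<lambda>w. g w $ c) z" for k c
    using assms by (intro dz_cong_open[of S]) auto
  then show ?thesis by (simp add: Jop_def Jentry_def)
qed

lemma integral_inner_Jop:
  fixes u v :: "real \<Rightarrow> real^'n"
  assumes u: "C_infinity_vec u" and v: "C_infinity_vec v"
  shows "integral {a..b} (\<lambda>z. u z \<bullet> Jop P m v z)
       = (\<Sum>i\<in>UNIV. \<Sum>j\<in>UNIV. \<Sum>k\<le>m.
            P k $ i $ j * integral {a..b} (\<lambda>z. u z $ i * dz k (\<lambda>w. v w $ j) z))"
proof -
  have C: "C_infinity (\<lambda>z. P k $ i $ j * (u z $ i * dz k (\<lambda>w. v w $ j) z))" for i j k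
    using u v unfolding C_infinity_vec_def by (intro C_infinity_cmult C_infinity_mult C_infinity_dz) auto
  have expand: "u z \<bullet> Jop P m v z
      = (\<Sum>i\<in>UNIV. \<Sum>j\<in>UNIV. \<Sum>k\<le>m. P k $ i $ j * (u z $ i * dz k (\<lambda>w. v w $ j) z))" for z
    by (simp add: inner_vec_def Jop_def Jentry_def sum_distrib_left mult_ac)
  have "integral {a..b} (\<lambda>z. u z \<bullet> Jop P m v z)
      = integral {a..b} (\<lambda>z. \<Sum>i\<in>UNIV. \<Sum>j\<in>UNIV. \<Sum>k\<le>m. P k $ i $ j * (u z $ i * dz k (\<lambda>w. v w $ j) z))"
    by (simp only: expand)
  also have "\<dots> = (\<Sum>i\<in>UNIV. \<Sum>j\<in>UNIV. \<Sum>k\<le>m.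
      integral {a..b} (\<lambda>z. P k $ i $ j * (u z $ i * dz k (\<lambda>w. v w $ j) z)))"
    by (rule integral_sum3_C_infinity) (simp_all add: C)
  finally show ?thesis
    by (simp only: integral_mult_const)
qed

lemma integral_inner_Jop_skew:
  fixes u v :: "real \<Rightarrow> real^'n"
  assumes skewP: "\<And>j. j \<le> m \<Longrightarrow> P j = ((-1) ^ (j + 1)) *\<^sub>R transpose (P j)"
    and u: "C_infinity_vec u" and v: "C_infinity_vec v" and cd: "a < c" "c \<le> d" "d < b"
    and supp: "vanishes_outside c d u \<or> vanishes_outside c d v"
  shows "integral {a..b} (\<lambda>z. u z \<bullet> Jop P m v z) = - integral {a..b} (\<lambda>z. Jop P m u z \<bullet> v z)"
proof -
  define A where "A i j k = integral {a..b} (\<lambda>z. dz k (\<lambda>w. u w $ i) z * v z $ j)" for i j k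
  have by_parts: "integral {a..b} (\<lambda>z. u z $ i * dz k (\<lambda>w. v w $ j) z) = (-1) ^ k * A i j k" for i j k
    using u v supp unfolding A_def C_infinity_vec_def vanishes_outside_vec_iff
    by (intro integral_by_parts_dz[OF _ cd]) auto
  have "integral {a..b} (\<lambda>z. u z \<bullet> Jop P m v z)
      = (\<Sum>i\<in>UNIV. \<Sum>j\<in>UNIV. \<Sum>k\<le>m. P k $ i $ j * ((-1) ^ k * A i j k))"
    by (simp only: integral_inner_Jop[OF u v] by_parts)
  also have "\<dots> = (\<Sum>i\<in>UNIV. \<Sum>j\<in>UNIV. \<Sum>k\<le>m. - (P k $ j $ i * A i j k))"
  proof (intro sum.cong refl)
    fix i j k assume "k \<in> {..m}"
    then have "P k $ i $ j = ((-1) ^ (k + 1) *\<^sub>R transpose (P k)) $ i $ j"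
      by (simp only: skewP[symmetric] atMost_iff)
    then show "P k $ i $ j * ((-1) ^ k * A i j k) = - (P k $ j $ i * A i j k)"
      by (simp add: transpose_def power_add)
  qed
  also have "\<dots> = - (\<Sum>j\<in>UNIV. \<Sum>i\<in>UNIV. \<Sum>k\<le>m. P k $ j $ i * A i j k)"
    unfolding sum_negf by (subst sum.swap) (rule refl)
  also have "\<dots> = - integral {a..b} (\<lambda>z. v z \<bullet> Jop P m u z)"
    by (simp only: integral_inner_Jop[OF v u] A_def mult.commute[of "v _ $ _"])
  finally show ?thesis
    by (simp only: inner_commute)
qed

lemma Jbb_eq_extended_state_Jop:
  fixes f :: "real \<Rightarrow> real^'l::finite"
  assumes f: "C_infinity_vec f"
  shows "Jbb P m I f = extended_state I (Jop P m (extended_state_adjoint I f))"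
proof (intro ext iffD2[OF vec_eq_iff] allI)
  fix z p
  define \<psi> where "\<psi> q v = (-1) ^ snd (I q) * dz (snd (I q)) (\<lambda>u. f u $ q) v" for q v
  have \<psi>: "C_infinity (\<psi> q)" for q
    using f by (simp add: \<psi>_def[abs_def] C_infinity_vec_def C_infinity_cmult C_infinity_dz)
  have "Jop P m (extended_state_adjoint I f) w $ fst (I p)
      = (\<Sum>q\<in>UNIV. Jentry P m (fst (I p)) (fst (I q)) (\<psi> q) w)" for w
  proof -
    have "Jop P m (extended_state_adjoint I f) w $ fst (I p)
        = (\<Sum>c\<in>UNIV. Jentry P m (fst (I p)) c (\<lambda>v. \<Sum>q | fst (I q) = c. \<psi> q v) w)"
      by (simp add: Jop_def extended_state_adjoint_def \<psi>_def)
    also have "\<dots> = (\<Sum>c\<in>UNIV. \<Sum>q | fst (I q) = c. Jentry P m (fst (I p)) (fst (I q)) (\<psi> q) w)"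
      by (simp add: Jentry_sum \<psi>)
    also have "\<dots> = (\<Sum>q\<in>UNIV. Jentry P m (fst (I p)) (fst (I q)) (\<psi> q) w)"
      by (rule sum_fibres_UNIV)
    finally show ?thesis .
  qed
  then have "extended_state I (Jop P m (extended_state_adjoint I f)) z $ p
      = dz (snd (I p)) (\<lambda>w. \<Sum>q\<in>UNIV. Jentry P m (fst (I p)) (fst (I q)) (\<psi> q) w) z"
    by (simp add: extended_state_def)
  also have "\<dots> = (\<Sum>q\<in>UNIV. dz (snd (I p)) (Jentry P m (fst (I p)) (fst (I q)) (\<psi> q)) z)"
    by (simp add: dz_sum C_infinity_Jentry \<psi>)
  also have "\<dots> = Jbb P m I f z $ p"
    by (simp add: Jbb_def \<psi>_def[abs_def])
  finally show "Jbb P m I f z $ p = extended_state I (Jop P m (extended_state_adjoint I f)) z $ p" ..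
qed

lemma Jbb_formally_skew_adjoint:
  fixes P :: "nat \<Rightarrow> real^'n^'n" and I :: "'l::finite \<Rightarrow> 'n \<times> nat"
  assumes skewP: "\<And>j. j \<le> m \<Longrightarrow> P j = ((-1) ^ (j + 1)) *\<^sub>R transpose (P j)"
  shows "formally_skew_adjoint a b (Jbb P m I)"
  unfolding formally_skew_adjoint_def
proof (intro allI impI)
  fix e f :: "real \<Rightarrow> real^'l"
  assume "test_fun a b e" "test_fun a b f"
  then obtain c d c' d' where e: "C_infinity_vec e" "a < c" "c \<le> d" "d < b" "vanishes_outside c d e"
    and f: "C_infinity_vec f" "a < c'" "c' \<le> d'" "d' < b" "vanishes_outside c' d' f"
    unfolding test_fun_iff by blast
  let ?Ae = "extended_state_adjoint I e" and ?Af = "extended_state_adjoint I f"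
  have Ae: "C_infinity_vec ?Ae" "vanishes_outside c d ?Ae" and Af: "C_infinity_vec ?Af"
    using e f
    by (simp_all add: C_infinity_vec_extended_state_adjoint vanishes_outside_extended_state_adjoint)
  have "integral {a..b} (\<lambda>z. e z \<bullet> Jbb P m I f z)
      = integral {a..b} (\<lambda>z. extended_state I (Jop P m ?Af) z \<bullet> e z)"
    by (simp add: Jbb_eq_extended_state_Jop[OF f(1)] inner_commute)
  also have "\<dots> = integral {a..b} (\<lambda>z. ?Ae z \<bullet> Jop P m ?Af z)"
    using integral_inner_extended_state[OF C_infinity_vec_Jop[OF Af] e(1-4)] e(5)
    by (simp add: inner_commute)
  also have "\<dots> = - integral {a..b} (\<lambda>z. Jop P m ?Ae z \<bullet> ?Af z)"
    using Ae Af e by (intro integral_inner_Jop_skew skewP) auto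
  also have "\<dots> = - integral {a..b} (\<lambda>z. extended_state I (Jop P m ?Ae) z \<bullet> f z)"
    using integral_inner_extended_state[OF C_infinity_vec_Jop[OF Ae(1)] f(1-4)] f(5) by simp
  also have "\<dots> = - integral {a..b} (\<lambda>z. Jbb P m I e z \<bullet> f z)"
    by (simp add: Jbb_eq_extended_state_Jop[OF e(1)])
  finally show "integral {a..b} (\<lambda>z. e z \<bullet> Jbb P m I f z)
      = - integral {a..b} (\<lambda>z. Jbb P m I e z \<bullet> f z)" .
qed

section \<open>Symmetry of mixed partial derivatives in the plane\<close>

lemma smooth_integral_form_snd:
  fixes X :: "real \<times> real \<Rightarrow> real"
  assumes X: "smooth X" and "\<alpha> \<le> z"
  shows "X (t, z) = X (t, \<alpha>) + integral {\<alpha>..z} (\<lambda>v. pder (0, 1) X (t, v))"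
proof -
  have "((\<lambda>v. pder (0, 1) X (t, v)) has_integral (X (t, z) - X (t, \<alpha>))) {\<alpha>..z}"
    using DERIV_snd[OF X] \<open>\<alpha> \<le> z\<close>
    by (intro fundamental_theorem_of_calculus)
      (auto simp: has_real_derivative_iff_has_vector_derivative[symmetric]
        has_field_derivative_at_within)
  then show ?thesis by (simp add: integral_unique)
qed

lemma smooth_integral_snd_DERIV_fst:
  fixes u :: "real \<times> real \<Rightarrow> real" and \<alpha> z :: real
  assumes u: "smooth u"
  shows "((\<lambda>t. integral {\<alpha>..z} (\<lambda>v. u (t, v))) has_real_derivative
           integral {\<alpha>..z} (\<lambda>v. pder (1, 0) u (t, v))) (at t)"
proof -
  have "continuous_on (UNIV \<times> cbox \<alpha> z) (\<lambda>(t, v). pder (1, 0) u (t, v))"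
    using smooth_continuous_on[OF smooth_pder[OF u Basis_real_prod(1)]] by simp
  then have "((\<lambda>t. integral (cbox \<alpha> z) (\<lambda>v. u (t, v))) has_real_derivative
      integral (cbox \<alpha> z) (\<lambda>v. pder (1, 0) u (t, v))) (at t within UNIV)"
    using DERIV_fst[OF u]
    by (intro leibniz_rule_field_derivative integrable_continuous
        C_infinity_continuous_on[OF C_infinity_snd[OF u]]) auto
  then show ?thesis by simp
qed

lemma pder_fst_integral_form_snd:
  fixes X :: "real \<times> real \<Rightarrow> real"
  assumes X: "smooth X" and "\<alpha> \<le> z"
  shows "pder (1, 0) X (t, z)
       = pder (1, 0) X (t, \<alpha>) + integral {\<alpha>..z} (\<lambda>v. pder (1, 0) (pder (0, 1) X) (t, v))"
proof -
  have "((\<lambda>s. X (s, \<alpha>) + integral {\<alpha>..z} (\<lambda>v. pder (0, 1) X (s, v))) has_real_derivative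
      pder (1, 0) X (t, \<alpha>) + integral {\<alpha>..z} (\<lambda>v. pder (1, 0) (pder (0, 1) X) (t, v))) (at t)"
    by (intro DERIV_add DERIV_fst X smooth_integral_snd_DERIV_fst smooth_pder Basis_real_prod)
  moreover have "(\<lambda>s. X (s, \<alpha>) + integral {\<alpha>..z} (\<lambda>v. pder (0, 1) X (s, v))) = (\<lambda>s. X (s, z))"
    using smooth_integral_form_snd[OF X \<open>\<alpha> \<le> z\<close>] by simp
  ultimately show ?thesis
    using DERIV_unique[OF DERIV_fst[OF X]] by simp
qed

text \<open>Differentiating the integral form of \<open>\<partial>_t X\<close> in \<open>z\<close> gives \<open>\<partial>_z \<partial>_t X = \<partial>_t \<partial>_z X\<close>.\<close>

lemma pder_snd_pder_fst:
  fixes X :: "real \<times> real \<Rightarrow> real"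
  assumes X: "smooth X"
  shows "pder (0, 1) (pder (1, 0) X) = pder (1, 0) (pder (0, 1) X)"
proof (intro ext, clarify)
  fix t0 z0 :: real
  define W where "W = pder (1, 0) X"
  define V where "V = pder (1, 0) (pder (0, 1) X)"
  define \<alpha> where "\<alpha> = z0 - 1"
  have "continuous_on S (\<lambda>v. V (t0, v))" for S
    using smooth_pder[OF smooth_pder[OF X Basis_real_prod(2)] Basis_real_prod(1)] unfolding V_def
    by (rule continuous_on_compose2[OF smooth_continuous_on]) (auto intro: continuous_intros)
  then have "((\<lambda>z. integral {\<alpha>..z} (\<lambda>v. V (t0, v))) has_real_derivative V (t0, z0))
      (at z0 within {\<alpha>..z0 + 1})"
    by (intro integral_has_real_derivative) (auto simp: \<alpha>_def)
  moreover have "z0 \<in> interior {\<alpha>..z0 + 1}"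
    by (simp add: \<alpha>_def)
  ultimately have "((\<lambda>z. integral {\<alpha>..z} (\<lambda>v. V (t0, v))) has_real_derivative V (t0, z0)) (at z0)"
    by (simp only: at_within_interior)
  from DERIV_add[OF DERIV_const[of "W (t0, \<alpha>)" "at z0"] this]
  have W_form_DERIV:
    "((\<lambda>z. W (t0, \<alpha>) + integral {\<alpha>..z} (\<lambda>v. V (t0, v))) has_real_derivative V (t0, z0)) (at z0)"
    by simp
  have "z0 \<in> {\<alpha><..}"
    by (simp add: \<alpha>_def)
  moreover have "W (t0, \<alpha>) + integral {\<alpha>..z} (\<lambda>v. V (t0, v)) = W (t0, z)" if "z \<in> {\<alpha><..}" for z
    using pder_fst_integral_form_snd[OF X, of \<alpha> z t0] that by (simp add: W_def V_def)
  ultimately have "((\<lambda>z. W (t0, z)) has_real_derivative V (t0, z0)) (at z0)"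
    by (rule has_field_derivative_transform_within_open[OF W_form_DERIV open_greaterThan])
  then show "pder (0, 1) (pder (1, 0) X) (t0, z0) = pder (1, 0) (pder (0, 1) X) (t0, z0)"
    by (simp add: pder_snd DERIV_imp_deriv W_def V_def)
qed

lemma pder_fst_funpow_pder_snd:
  fixes X :: "real \<times> real \<Rightarrow> real"
  assumes "smooth X"
  shows "pder (1, 0) ((pder (0, 1) ^^ j) X) = (pder (0, 1) ^^ j) (pder (1, 0) X)"
proof (induction j)
  case (Suc j)
  have "smooth ((pder (0, 1) ^^ j) X)"
    using assms by (rule smooth_funpow_pder[OF _ Basis_real_prod(2)])
  then show ?case
    using Suc.IH by (simp add: pder_snd_pder_fst[symmetric])
qed simp

lemma deriv_dz_snd_commute:
  fixes X :: "real \<times> real \<Rightarrow> real"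
  assumes "smooth X"
  shows "deriv (\<lambda>s. dz j (\<lambda>w. X (s, w)) z) t = dz j (\<lambda>w. deriv (\<lambda>s. X (s, w)) t) z"
proof -
  have "deriv (\<lambda>s. dz j (\<lambda>w. X (s, w)) z) t = pder (1, 0) ((pder (0, 1) ^^ j) X) (t, z)"
    by (simp add: dz_snd pder_fst)
  also have "\<dots> = (pder (0, 1) ^^ j) (pder (1, 0) X) (t, z)"
    by (simp add: pder_fst_funpow_pder_snd[OF assms])
  also have "\<dots> = dz j (\<lambda>w. pder (1, 0) X (t, w)) z"
    by (simp add: dz_snd)
  also have "\<dots> = dz j (\<lambda>w. deriv (\<lambda>s. X (s, w)) t) z"
    by (simp add: pder_fst)
  finally show ?thesis .
qed

section \<open>The variational derivative of the Hamiltonian functional\<close>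

lemma C_infinity_vec_continuous_on: "C_infinity_vec f \<Longrightarrow> continuous_on S f"
  using continuous_on_vec_lambda[of S "\<lambda>i z. f z $ i"]
  by (simp add: C_infinity_vec_def C_infinity_continuous_on)

lemma C_infinity_vec_grad_compose:
  "smooth H \<Longrightarrow> C_infinity_vec \<gamma> \<Longrightarrow> C_infinity_vec (\<lambda>z. grad H (\<gamma> z))"
  by (simp add: C_infinity_vec_def grad_def C_infinity_smooth_compose smooth_pder axis_1_in_Basis)

lemma Hfunc_eq_integral_extended_state:
  "Hfunc a b H I x = integral {a..b} (\<lambda>z. H (extended_state I x z))"
  by (simp add: Hfunc_def extended_state_def)

lemma integral_smooth_compose_line_DERIV:
  fixes H :: "real^'l \<Rightarrow> real" and X E :: "real \<Rightarrow> real^'l"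
  assumes H: "smooth H" and X: "continuous_on UNIV X" and E: "continuous_on UNIV E"
  shows "((\<lambda>\<epsilon>. integral {a..b} (\<lambda>z. H (X z + \<epsilon> *\<^sub>R E z))) has_real_derivative
           integral {a..b} (\<lambda>z. E z \<bullet> grad H (X z))) (at 0)"
proof -
  have grad_cont: "continuous_on S (grad H)" for S
    unfolding grad_def
    by (intro continuous_on_vec_lambda smooth_continuous_on smooth_pder[OF H axis_1_in_Basis])
  have "((\<lambda>\<epsilon>. H (X z + \<epsilon> *\<^sub>R E z)) has_real_derivative E z \<bullet> grad H (X z + \<epsilon> *\<^sub>R E z)) (at \<epsilon>)"
    for \<epsilon> z
    using H by (intro smooth_compose_DERIV) (auto intro!: derivative_eq_intros)
  moreover have "continuous_on (UNIV \<times> cbox a b) (\<lambda>(\<epsilon>, z). E z \<bullet> grad H (X z + \<epsilon> *\<^sub>R E z))"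
    unfolding case_prod_beta
    by (intro continuous_intros continuous_on_compose2[OF grad_cont]
        continuous_on_compose2[OF X] continuous_on_compose2[OF E]) auto
  moreover have "(\<lambda>z. H (X z + \<epsilon> *\<^sub>R E z)) integrable_on cbox a b" for \<epsilon>
    by (intro integrable_continuous continuous_on_compose2[OF smooth_continuous_on[OF H]]
        continuous_intros continuous_on_subset[OF X] continuous_on_subset[OF E]) auto
  ultimately have "((\<lambda>\<epsilon>. integral (cbox a b) (\<lambda>z. H (X z + \<epsilon> *\<^sub>R E z))) has_real_derivative
      integral (cbox a b) (\<lambda>z. E z \<bullet> grad H (X z + 0 *\<^sub>R E z))) (at 0 within UNIV)"
    by (intro leibniz_rule_field_derivative) auto
  then show ?thesis by simp
qed

lemma Hfunc_first_variation:
  assumes H: "smooth H" and x: "C_infinity_vec x" and \<eta>: "C_infinity_vec \<eta>"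
  shows "((\<lambda>\<epsilon>. Hfunc a b H I (\<lambda>z. x z + \<epsilon> *\<^sub>R \<eta> z)) has_real_derivative
           integral {a..b} (\<lambda>z. extended_state I \<eta> z \<bullet> grad H (extended_state I x z))) (at 0)"
  using integral_smooth_compose_line_DERIV[OF H,
      of "extended_state I x" "extended_state I \<eta>" a b] x \<eta>
  by (simp add: Hfunc_eq_integral_extended_state extended_state_add_scaleR
      C_infinity_vec_continuous_on C_infinity_vec_extended_state)

lemma is_var_deriv_Hfunc_orthogonal:
  fixes H :: "real^'l::finite \<Rightarrow> real" and x g :: "real \<Rightarrow> real^'n" and I :: "'l \<Rightarrow> 'n \<times> nat"
  assumes H: "smooth H" and x: "C_infinity_vec x" and g: "C_infinity_vec g"
    and var: "is_var_deriv a b (Hfunc a b H I) x g"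
    and \<phi>: "C_infinity \<phi>" and cd: "a < c" "c \<le> d" "d < b" and supp: "vanishes_outside c d \<phi>"
  defines "G \<equiv> extended_state_adjoint I (\<lambda>w. grad H (extended_state I x w))"
  shows "integral {a..b} (\<lambda>w. (g w $ i - G w $ i) * \<phi> w) = 0"
proof -
  define \<eta> where "\<eta> w = (\<chi> j. if j = i then \<phi> w else 0)" for w
  have "C_infinity (\<lambda>w. \<eta> w $ j)" for j
    using \<phi> C_infinity_const[of 0] by (cases "j = i") (simp_all add: \<eta>_def)
  moreover have "vanishes_outside c d \<eta>"
    using supp by (simp add: \<eta>_def vanishes_outside_def vec_eq_iff)
  ultimately have \<eta>: "C_infinity_vec \<eta>" "vanishes_outside c d \<eta>"
    by (simp_all add: C_infinity_vec_def)
  have inner_\<eta>: "y \<bullet> \<eta> w = y $ i * \<phi> w" "\<eta> w \<bullet> y = y $ i * \<phi> w" for y w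
  proof -
    have "y \<bullet> \<eta> w = (\<Sum>j\<in>UNIV. if j = i then y $ i * \<phi> w else 0)"
      unfolding inner_vec_def \<eta>_def by (intro sum.cong) auto
    then show "y \<bullet> \<eta> w = y $ i * \<phi> w" by simp
    then show "\<eta> w \<bullet> y = y $ i * \<phi> w" by (simp add: inner_commute)
  qed
  have grad: "C_infinity_vec (\<lambda>w. grad H (extended_state I x w))"
    using H x by (simp add: C_infinity_vec_grad_compose C_infinity_vec_extended_state)
  then have G: "C_infinity_vec G"
    by (simp add: G_def C_infinity_vec_extended_state_adjoint)
  have "integral {a..b} (\<lambda>w. g w \<bullet> \<eta> w)
      = integral {a..b} (\<lambda>w. extended_state I \<eta> w \<bullet> grad H (extended_state I x w))"
    using var \<eta> cd unfolding is_var_deriv_def test_fun_iff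
    by (blast intro: DERIV_unique Hfunc_first_variation[OF H x \<eta>(1)])
  also have "\<dots> = integral {a..b} (\<lambda>w. \<eta> w \<bullet> G w)"
    unfolding G_def using \<eta> cd grad by (intro integral_inner_extended_state) auto
  finally have "integral {a..b} (\<lambda>w. g w $ i * \<phi> w) = integral {a..b} (\<lambda>w. G w $ i * \<phi> w)"
    by (simp add: inner_\<eta>)
  moreover have "(\<lambda>w. g w $ i * \<phi> w) integrable_on {a..b}"
    "(\<lambda>w. G w $ i * \<phi> w) integrable_on {a..b}"
    using g G \<phi> by (simp_all add: C_infinity_vec_def C_infinity_integrable C_infinity_mult)
  ultimately show ?thesis
    by (simp add: left_diff_distrib integral_diff)
qed

lemma is_var_deriv_Hfunc_eq:
  fixes H :: "real^'l::finite \<Rightarrow> real" and x g :: "real \<Rightarrow> real^'n" and I :: "'l \<Rightarrow> 'n \<times> nat"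
  assumes H: "smooth H" and x: "C_infinity_vec x" and g: "C_infinity_vec g"
    and var: "is_var_deriv a b (Hfunc a b H I) x g" and z: "z \<in> {a<..<b}"
  shows "g z = extended_state_adjoint I (\<lambda>w. grad H (extended_state I x w)) z"
proof -
  let ?G = "extended_state_adjoint I (\<lambda>w. grad H (extended_state I x w))"
  have "C_infinity_vec ?G"
    using H x by (simp add: C_infinity_vec_grad_compose C_infinity_vec_extended_state
        C_infinity_vec_extended_state_adjoint)
  then have "g z $ i - ?G z $ i = 0" for i
    using g z is_var_deriv_Hfunc_orthogonal[OF H x g var]
    by (intro fundamental_lemma_calculus_of_variations[where h = "\<lambda>w. g w $ i - ?G w $ i"])
      (auto simp: C_infinity_vec_def C_infinity_continuous_on C_infinity_diff)
  then show ?thesis by (simp add: vec_eq_iff)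
qed

lemma lifted_hamiltonian_system:
  fixes H :: "real^'l::finite \<Rightarrow> real" and x g :: "real \<Rightarrow> real \<Rightarrow> real^'n"
    and I :: "'l \<Rightarrow> 'n \<times> nat" and P :: "nat \<Rightarrow> real^'n^'n"
  assumes H: "smooth H" and x_smooth: "\<And>i. smooth (\<lambda>(t, z). x t z $ i)"
    and g_smooth: "\<And>i. smooth (\<lambda>(t, z). g t z $ i)"
    and g_var: "\<And>t. is_var_deriv a b (Hfunc a b H I) (x t) (g t)"
    and sol: "\<And>t z i. z \<in> {a<..<b} \<Longrightarrow> deriv (\<lambda>s. x s z $ i) t = Jop P m (g t) z $ i"
    and z: "z \<in> {a<..<b}"
  shows "deriv (\<lambda>s. extended_state I (x s) z $ p) t
           = Jbb P m I (\<lambda>w. grad H (extended_state I (x t) w)) z $ p"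
proof -
  have x: "C_infinity_vec (x t)" and g: "C_infinity_vec (g t)"
    using C_infinity_snd[OF x_smooth] C_infinity_snd[OF g_smooth] by (simp_all add: C_infinity_vec_def)
  define grad_H where "grad_H w = grad H (extended_state I (x t) w)" for w
  have grad_H: "C_infinity_vec grad_H"
    unfolding grad_H_def[abs_def] using H x
    by (simp add: C_infinity_vec_grad_compose C_infinity_vec_extended_state)
  have "deriv (\<lambda>s. extended_state I (x s) z $ p) t
      = dz (snd (I p)) (\<lambda>w. deriv (\<lambda>s. x s w $ fst (I p)) t) z"
    using deriv_dz_snd_commute[OF x_smooth[of "fst (I p)"]] by (simp add: extended_state_def)
  also have "\<dots> = dz (snd (I p)) (\<lambda>w. Jop P m (g t) w $ fst (I p)) z"
    using sol z by (intro dz_cong_open[of "{a<..<b}"]) auto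
  also have "\<dots> = dz (snd (I p)) (\<lambda>w. Jop P m (extended_state_adjoint I grad_H) w $ fst (I p)) z"
  proof -
    have "Jop P m (g t) w = Jop P m (extended_state_adjoint I grad_H) w" if "w \<in> {a<..<b}" for w
      using is_var_deriv_Hfunc_eq[OF H x g g_var] that
      by (intro Jop_cong_open[of "{a<..<b}"]) (auto simp: grad_H_def[abs_def])
    then show ?thesis
      using z by (intro dz_cong_open[of "{a<..<b}"]) auto
  qed
  also have "\<dots> = Jbb P m I grad_H z $ p"
    by (simp add: Jbb_eq_extended_state_Jop[OF grad_H] extended_state_def)
  finally show ?thesis
    by (simp add: grad_H_def[abs_def])
qed

text \<open>The injectivity and ordering of the index pairs and the bound \<open>m_d\<close> are not needed.\<close>

theorem proposition3:
  fixes a b :: real and m m_d :: nat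
    and P :: "nat \<Rightarrow> real^'n^'n"
    and I :: "'l::{finite,linorder} \<Rightarrow> 'n \<times> nat"
    and H :: "real^('l::{finite,linorder}) \<Rightarrow> real"
    and x g :: "real \<Rightarrow> real \<Rightarrow> real^'n"
  assumes skewP: "\<And>j. j \<le> m \<Longrightarrow> P j = ((-1) ^ (j + 1)) *\<^sub>R transpose (P j)"
    and I_inj: "inj I"
    and I_range: "\<And>p. snd (I p) \<le> m_d"
    and I_sorted: "\<And>p q. p \<le> q \<Longrightarrow> snd (I p) \<le> snd (I q)"
    and H_smooth: "smooth H"
    and x_smooth: "\<And>i. smooth (\<lambda>(t, z). x t z $ i)"
    and g_smooth: "\<And>i. smooth (\<lambda>(t, z). g t z $ i)"
    and g_var: "\<And>t. is_var_deriv a b (Hfunc a b H I) (x t) (g t)"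
    and sol: "\<And>t z i. z \<in> {a<..<b} \<Longrightarrow>
                 deriv (\<lambda>s. x s z $ i) t = Jop P m (g t) z $ i"
  shows "(\<forall>t z p. z \<in> {a<..<b} \<longrightarrow>
            deriv (\<lambda>s. dz (snd (I p)) (\<lambda>w. x s w $ fst (I p)) z) t
            = Jbb P m I
                (\<lambda>w. \<chi> q. pder (axis q 1) H
                        (\<chi> r. dz (snd (I r)) (\<lambda>u. x t u $ fst (I r)) w)) z $ p)
         \<and> formally_skew_adjoint a b (Jbb P m I)"
  using lifted_hamiltonian_system[OF H_smooth x_smooth g_smooth g_var sol]
    Jbb_formally_skew_adjoint[OF skewP]
  by (simp add: extended_state_def grad_def)

end
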